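(* Consider an instance of the Side-Access Compact Retrieval Problem, a feasible solution, a cycle $c$ of it, and the set $Y$ of targets retrieved in cycle $c$. List the distinct heights $\{h_c(b): b\in Y\}$ in increasing order as $h_1<\dots<h_p$. Then $h_{i+1}=h_i+1$ for all $i\in\{1,\dots,p-1\}$, i.e., the heights of $Y$ form a consecutive interval.
   Context: A slice is a sequence of stacks $T=(1,\dots,m)$, indexed from the entry side (stack $1$) outward; "left" means smaller index. Stack $t$ initially consists of $h(t)\ge0$ unit loads (ULs) stacked without gaps; a UL at height $k$ has exactly $k$ ULs below it in its stack. A pick-list $\mathcal B$ of target ULs is given; target $b$ lies in stack $s(b)$ at initial height $h(b)$. Retrieval proceeds in cycles $c=1,2,\dots$; $h_c(t)$, $h_c(b)$ are the heights of stack $t$ and of a not-yet-retrieved target $b$ at the start of cycle $c$ ($h_1=h$). In cycle $c$ one chooses clearance levels $\ell_c(t)\in\{0,\dots,h_c(t)\}$: the top $e_c(t)=h_c(t)-\ell_c(t)$ ULs of stack $t$ are lifted for the whole cycle. Then a sequence $(b_{c,1},\dots,b_{c,k})$ of targets is retrieved, with residual heights $d_{c,0}=\ell_c$ and $d_{c,i}(t)=d_{c,i-1}(t)-1$ if $t=s(b_{c,i})$, else unchanged. Retrieving $b$ (stack $t$, height $h=h_c(b)$) as the $i$-th retrieval requires accessibility: (a) $d_{c,i-1}(t)=h+1$ and (b) $d_{c,i-1}(t')=h$ for all $t'<t$. Afterwards lifted ULs are lowered, $h_{c+1}(t)=d_{c,k}(t)+e_c(t)$, and each remaining target's height decreases by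 the number of targets retrieved in cycle $c$ below it in its stack. Non-targets are never removed. A solution is feasible if every target is retrieved exactly once and is accessible when retrieved. *)

theory Defs
  imports Main
begin

(* Stacks are indexed 1..m. Targets are elements of an abstract type 'b;
   s b = stack of target b, hb0 b = initial height of b. A "state" is a pair
   (H, hb): H t = current height of stack t, hb b = current height of a
   not-yet-retrieved target b. A cycle is a pair (l, bs): clearance levels l
   and the ordered retrieval sequence bs. *)

definition valid_instance ::
  "nat \<Rightarrow> (nat \<Rightarrow> nat) \<Rightarrow> 'b set \<Rightarrow> ('b \<Rightarrow> nat) \<Rightarrow> ('b \<Rightarrow> nat) \<Rightarrow> bool" where
  "valid_instance m h B s hb0 \<longleftrightarrow>
     finite B \<and>
     (\<forall>b\<in>B. 1 \<le> s b \<and> s b \<le> m \<and> hb0 b < h (s b)) \<and>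
     inj_on (\<lambda>b. (s b, hb0 b)) B"

fun resid :: "('b \<Rightarrow> nat) \<Rightarrow> (nat \<Rightarrow> nat) \<Rightarrow> 'b list \<Rightarrow> (nat \<Rightarrow> nat)" where
  "resid s d [] = d"
| "resid s d (b # bs) = resid s (d(s b := d (s b) - 1)) bs"

definition accessible ::
  "('b \<Rightarrow> nat) \<Rightarrow> (nat \<Rightarrow> nat) \<Rightarrow> ('b \<Rightarrow> nat) \<Rightarrow> 'b \<Rightarrow> bool" where
  "accessible s d hb b \<longleftrightarrow>
     d (s b) = hb b + 1 \<and> (\<forall>t'. 1 \<le> t' \<and> t' < s b \<longrightarrow> d t' = hb b)"

definition cycle_step ::
  "('b \<Rightarrow> nat) \<Rightarrow> (nat \<Rightarrow> nat) \<times> ('b \<Rightarrow> nat) \<Rightarrow> (nat \<Rightarrow> nat) \<times> 'b list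
     \<Rightarrow> (nat \<Rightarrow> nat) \<times> ('b \<Rightarrow> nat)" where
  "cycle_step s st cyc =
     (let H = fst st; hb = snd st; l = fst cyc; bs = snd cyc in
      (\<lambda>t. resid s l bs t + (H t - l t),
       \<lambda>b. hb b - card {b'\<in>set bs. s b' = s b \<and> hb b' < hb b}))"

(* state at the start of cycle with 0-based index c *)
definition state_at ::
  "('b \<Rightarrow> nat) \<Rightarrow> (nat \<Rightarrow> nat) \<Rightarrow> ('b \<Rightarrow> nat) \<Rightarrow> ((nat \<Rightarrow> nat) \<times> 'b list) list \<Rightarrow> nat
     \<Rightarrow> (nat \<Rightarrow> nat) \<times> ('b \<Rightarrow> nat)" where
  "state_at s h hb0 cs c = foldl (cycle_step s) (h, hb0) (take c cs)"

definition valid_cycle ::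
  "nat \<Rightarrow> ('b \<Rightarrow> nat) \<Rightarrow> (nat \<Rightarrow> nat) \<times> ('b \<Rightarrow> nat) \<Rightarrow> (nat \<Rightarrow> nat) \<times> 'b list \<Rightarrow> bool" where
  "valid_cycle m s st cyc \<longleftrightarrow>
     (\<forall>t. 1 \<le> t \<and> t \<le> m \<longrightarrow> fst cyc t \<le> fst st t) \<and>
     (\<forall>i < length (snd cyc).
        accessible s (resid s (fst cyc) (take i (snd cyc))) (snd st) (snd cyc ! i))"

definition feasible ::
  "nat \<Rightarrow> (nat \<Rightarrow> nat) \<Rightarrow> 'b set \<Rightarrow> ('b \<Rightarrow> nat) \<Rightarrow> ('b \<Rightarrow> nat)
     \<Rightarrow> ((nat \<Rightarrow> nat) \<times> 'b list) list \<Rightarrow> bool" where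
  "feasible m h B s hb0 cs \<longleftrightarrow>
     distinct (concat (map snd cs)) \<and> set (concat (map snd cs)) = B \<and>
     (\<forall>c < length cs. valid_cycle m s (state_at s h hb0 cs c) (cs ! c))"

end

theory Submission
  imports Defs
begin

text \<open>Let \<open>t\<^sub>0\<close> be the leftmost stack from which cycle \<open>c\<close> retrieves. Accessibility forces
  every target retrieved in the cycle to sit exactly at the residual level of \<open>t\<^sub>0\<close> right after
  its retrieval, and each retrieval lowers that level by at most one. So the heights of the
  retrieved targets are the values of a walk that descends in unit steps, which form an
  interval.\<close>

lemma resid_snoc: "resid s d (xs @ [x]) = (resid s d xs)(s x := resid s d xs (s x) - 1)"
  by (induction xs arbitrary: d) auto

lemma accessible_leftmost_level:
  assumes "accessible s d hb b" and "1 \<le> t\<^sub>0" and "t\<^sub>0 \<le> s b"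
  shows "(d(s b := d (s b) - 1)) t\<^sub>0 = hb b" and "d t\<^sub>0 \<in> {hb b, Suc (hb b)}"
  using assms by (cases "t\<^sub>0 = s b"; auto simp: accessible_def)+

lemma retrieval_height_eq_leftmost_resid:
  assumes "\<forall>i<length bs. accessible s (resid s l (take i bs)) hb (bs ! i)"
    and "1 \<le> t\<^sub>0" and "\<forall>b\<in>set bs. t\<^sub>0 \<le> s b" and j: "j < length bs"
  shows "hb (bs ! j) = resid s l (take (Suc j) bs) t\<^sub>0"
    and "resid s l (take j bs) t\<^sub>0 \<in> {hb (bs ! j), Suc (hb (bs ! j))}"
proof -
  have take_Suc: "take (Suc j) bs = take j bs @ [bs ! j]"
    using j by (simp add: take_Suc_conv_app_nth)
  have "accessible s (resid s l (take j bs)) hb (bs ! j)" and "t\<^sub>0 \<le> s (bs ! j)"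
    using assms by auto
  note leftmost = accessible_leftmost_level[OF this(1) \<open>1 \<le> t\<^sub>0\<close> this(2)]
  show "hb (bs ! j) = resid s l (take (Suc j) bs) t\<^sub>0"
    using leftmost(1) by (simp add: take_Suc resid_snoc)
  show "resid s l (take j bs) t\<^sub>0 \<in> {hb (bs ! j), Suc (hb (bs ! j))}"
    using leftmost(2) .
qed

lemma unit_descent_image_atLeastAtMost:
  fixes D :: "nat \<Rightarrow> nat"
  assumes steps: "\<And>j. i \<le> j \<Longrightarrow> j < k \<Longrightarrow> D j \<in> {D (Suc j), Suc (D (Suc j))}"
    and "i \<le> k"
  shows "D ` {i..k} = {D k..D i}"
  using \<open>i \<le> k\<close>
proof (induction k rule: dec_induct)
  case base
  then show ?case by simp
next
  case (step k)
  have "{i..Suc k} = insert (Suc k) {i..k}"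
    using step.hyps(1) by auto
  moreover have "D k \<in> {D (Suc k), Suc (D (Suc k))}"
    using steps step.hyps by simp
  moreover have "D k \<le> D i"
  proof -
    have "D k \<in> D ` {i..k}"
      using step.hyps(1) by simp
    then show ?thesis
      using step.IH by simp
  qed
  ultimately show ?case
    using step.IH by auto
qed

lemma cycle_heights_atLeastAtMost:
  assumes "\<forall>i<length bs. accessible s (resid s l (take i bs)) hb (bs ! i)"
    and "1 \<le> t\<^sub>0" and "\<forall>b\<in>set bs. t\<^sub>0 \<le> s b" and "bs \<noteq> []"
  shows "hb ` set bs = {resid s l bs t\<^sub>0..resid s l (take 1 bs) t\<^sub>0}"
proof -
  define D where "D j = resid s l (take j bs) t\<^sub>0" for j
  note level = retrieval_height_eq_leftmost_resid[OF assms(1-3), folded D_def]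
  have "hb ` set bs = (\<lambda>j. hb (bs ! j)) ` {..<length bs}"
    unfolding set_conv_nth by blast
  also have "\<dots> = D ` Suc ` {..<length bs}"
    by (simp add: level(1) image_image)
  also have "\<dots> = D ` {1..length bs}"
    by (simp add: image_Suc_lessThan)
  also have "\<dots> = {D (length bs)..D 1}"
  proof (rule unit_descent_image_atLeastAtMost)
    fix j assume "1 \<le> j" "j < length bs"
    then show "D j \<in> {D (Suc j), Suc (D (Suc j))}"
      using level(1,2)[of j] by simp
  qed (use \<open>bs \<noteq> []\<close> in \<open>simp add: Suc_le_eq\<close>)
  finally show ?thesis
    by (simp add: D_def)
qed

lemma nth_sorted_list_of_set_atLeastAtMost:
  fixes a b :: nat
  assumes "i + 1 < length (sorted_list_of_set {a..b})"
  shows "sorted_list_of_set {a..b} ! (i + 1) = sorted_list_of_set {a..b} ! i + 1"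
proof -
  have "sorted_list_of_set {a..b} = [a..<Suc b]"
    by (simp flip: atLeastLessThanSuc_atLeastAtMost del: upt_Suc)
  with assms show ?thesis
    by (simp del: upt_Suc)
qed

theorem lemma2:
  fixes m :: nat and h :: "nat \<Rightarrow> nat" and B :: "'b set"
    and s hb0 :: "'b \<Rightarrow> nat" and cs :: "((nat \<Rightarrow> nat) \<times> 'b list) list" and c :: nat
  assumes "valid_instance m h B s hb0"
    and "feasible m h B s hb0 cs"
    and "c < length cs"
  shows "let hc = snd (state_at s h hb0 cs c);
             Y = set (snd (cs ! c));
             L = sorted_list_of_set (hc ` Y)
         in \<forall>i. i + 1 < length L \<longrightarrow> L ! (i + 1) = L ! i + 1"
proof (cases "snd (cs ! c) = []")
  case True
  then show ?thesis by simp
next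
  case False
  define hc where "hc = snd (state_at s h hb0 cs c)"
  define bs where "bs = snd (cs ! c)"
  define l where "l = fst (cs ! c)"
  define t\<^sub>0 where "t\<^sub>0 = Min (s ` set bs)"
  have acc: "\<forall>i<length bs. accessible s (resid s l (take i bs)) hc (bs ! i)"
    using assms(2,3) unfolding feasible_def valid_cycle_def hc_def bs_def l_def by auto
  have "set bs \<subseteq> B"
    using assms(2,3) unfolding feasible_def bs_def by fastforce
  then have "1 \<le> t\<^sub>0" and "\<forall>b\<in>set bs. t\<^sub>0 \<le> s b"
    using assms(1) False unfolding valid_instance_def t\<^sub>0_def bs_def by auto
  from cycle_heights_atLeastAtMost[OF acc this] False
  have "hc ` set bs = {resid s l bs t\<^sub>0..resid s l (take 1 bs) t\<^sub>0}"
    by (simp add: bs_def)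
  then show ?thesis
    unfolding Let_def hc_def[symmetric] bs_def[symmetric]
    using nth_sorted_list_of_set_atLeastAtMost by presburger
qed

end
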